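(* (a) If $A\in\mathcal{L}$, then $\Omega\setminus A\in\mathcal{U}$. (b) $\mathcal{U}$ is a quadratic algebra of subsets of $\Omega$.
   Context: $\Omega$ is the set of infinite sequences $\alpha_0\alpha_1\alpha_2\cdots$ with $\alpha_k\in\{0,1\}$ and $\alpha_0=0$. For $A\subseteq\Omega$ and $n\ge0$, $A^{(n)}=\{\omega\in\Omega:\text{there is }\omega'\in A\text{ whose first }n+1\text{ entries agree with those of }\omega\}$. $A$ is a lower set if $A=\bigcap_n A^{(n)}$; $\mathcal{L}$ is the collection of lower sets. $A$ is an upper set if $A=\bigcup_n\big(\Omega\setminus(\Omega\setminus A)^{(n)}\big)$; $\mathcal{U}$ is the collection of upper sets. A collection $Q$ of subsets of a set $S$ is a quadratic algebra if $\emptyset,S\in Q$ and whenever $A,B,C\in Q$ are mutually disjoint with $A\cup B,A\cup C,B\cup C\in Q$, then $A\cup B\cup C\in Q$. *)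

theory Defs
  imports Main
begin

text \<open>Sequences alpha_0 alpha_1 ... with entries in {0,1} are modelled as
  functions nat => bool (False = 0, True = 1); Omega requires alpha_0 = 0.\<close>

definition Omega :: "(nat \<Rightarrow> bool) set" where
  "Omega = {w. w 0 = False}"

definition approx :: "(nat \<Rightarrow> bool) set \<Rightarrow> nat \<Rightarrow> (nat \<Rightarrow> bool) set" where
  "approx A n = {w \<in> Omega. \<exists>w' \<in> A. \<forall>k\<le>n. w' k = w k}"

definition lower_set :: "(nat \<Rightarrow> bool) set \<Rightarrow> bool" where
  "lower_set A \<longleftrightarrow> A = (\<Inter>n. approx A n)"

definition upper_set :: "(nat \<Rightarrow> bool) set \<Rightarrow> bool" where
  "upper_set A \<longleftrightarrow> A = (\<Union>n. Omega - approx (Omega - A) n)"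

definition LL :: "(nat \<Rightarrow> bool) set set" where
  "LL = {A. A \<subseteq> Omega \<and> lower_set A}"

definition UU :: "(nat \<Rightarrow> bool) set set" where
  "UU = {A. A \<subseteq> Omega \<and> upper_set A}"

definition quadratic_algebra :: "'a set \<Rightarrow> 'a set set \<Rightarrow> bool" where
  "quadratic_algebra S Q \<longleftrightarrow> Q \<subseteq> Pow S \<and> {} \<in> Q \<and> S \<in> Q \<and>
     (\<forall>A\<in>Q. \<forall>B\<in>Q. \<forall>C\<in>Q. A \<inter> B = {} \<and> A \<inter> C = {} \<and> B \<inter> C = {} \<and>
        A \<union> B \<in> Q \<and> A \<union> C \<in> Q \<and> B \<union> C \<in> Q \<longrightarrow> A \<union> B \<union> C \<in> Q)"

end

theory Submission
  imports Defs
begin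

text \<open>The operator \<open>A \<mapsto> \<Union>n. \<Omega> - (\<Omega> - A)\<^sup>(\<^sup>n\<^sup>)\<close> is monotone and
  deflationary, and the upper sets are exactly its fixed points; hence they are closed
  under binary unions, which already makes them a quadratic algebra. Complementation in
  \<open>\<Omega>\<close> turns the defining equation of a lower set into that of an upper set.\<close>

lemma quadratic_algebra_if_Un_closed:
  assumes "Q \<subseteq> Pow S" "{} \<in> Q" "S \<in> Q" "\<And>A B. A \<in> Q \<Longrightarrow> B \<in> Q \<Longrightarrow> A \<union> B \<in> Q"
  shows "quadratic_algebra S Q"
  using assms unfolding quadratic_algebra_def by blast

lemma approx_mono: "X \<subseteq> Y \<Longrightarrow> approx X n \<subseteq> approx Y n"
  unfolding approx_def by blast

lemma approx_Omega: "approx Omega n = Omega"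
  unfolding approx_def by blast

lemma approx_empty: "approx {} n = {}"
  unfolding approx_def by blast

lemma interior_subset: "(\<Union>n. Omega - approx (Omega - A) n) \<subseteq> A"
  unfolding approx_def by blast

lemma upper_set_iff_subset:
  "upper_set A \<longleftrightarrow> A \<subseteq> (\<Union>n. Omega - approx (Omega - A) n)"
  unfolding upper_set_def using interior_subset[of A] by (metis subset_antisym)

lemma upper_set_Diff_lower_set:
  assumes "A \<subseteq> Omega" "lower_set A"
  shows "upper_set (Omega - A)"
proof -
  have "Omega - A = (\<Union>n. Omega - approx A n)"
    using assms(2) unfolding lower_set_def by blast
  also have "\<dots> = (\<Union>n. Omega - approx (Omega - (Omega - A)) n)"
    using assms(1) by (simp add: double_diff)
  finally show ?thesis unfolding upper_set_def .
qed

lemma interior_mono: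
  "A \<subseteq> B \<Longrightarrow> (\<Union>n. Omega - approx (Omega - A) n) \<subseteq> (\<Union>n. Omega - approx (Omega - B) n)"
  by (intro UN_mono Diff_mono order_refl approx_mono) blast

lemma upper_set_Un:
  assumes "upper_set A" "upper_set B"
  shows "upper_set (A \<union> B)"
proof -
  have "A \<subseteq> (\<Union>n. Omega - approx (Omega - (A \<union> B)) n)"
    using assms(1) interior_mono[of A "A \<union> B"] unfolding upper_set_iff_subset by blast
  moreover have "B \<subseteq> (\<Union>n. Omega - approx (Omega - (A \<union> B)) n)"
    using assms(2) interior_mono[of B "A \<union> B"] unfolding upper_set_iff_subset by blast
  ultimately show ?thesis
    unfolding upper_set_iff_subset by (rule Un_least)
qed

lemma upper_set_empty: "upper_set {}"
  unfolding upper_set_def by (simp add: approx_Omega)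

lemma upper_set_Omega: "upper_set Omega"
  unfolding upper_set_def by (simp add: approx_empty)

theorem theorem4p4:
  shows "(\<forall>A \<in> LL. Omega - A \<in> UU) \<and> quadratic_algebra Omega UU"
proof
  show "\<forall>A \<in> LL. Omega - A \<in> UU"
    unfolding LL_def UU_def using upper_set_Diff_lower_set by blast
  show "quadratic_algebra Omega UU"
  proof (rule quadratic_algebra_if_Un_closed)
    show "UU \<subseteq> Pow Omega" "{} \<in> UU" "Omega \<in> UU"
      unfolding UU_def using upper_set_empty upper_set_Omega by auto
    show "A \<union> B \<in> UU" if "A \<in> UU" "B \<in> UU" for A B
      using that upper_set_Un unfolding UU_def by simp
  qed
qed

end
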